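(* Let $r\ge2$, $d_1=1$, $\lambda_1=0$, $d_i\ge2$ integers and $\lambda_i>0$ for $i=2,\dots,r$, $n=\sum_id_i$. In the variables $(X_1,\dots,X_r,Y_2,\dots,Y_r)$ consider the system $X_i'=X_i(\mathcal G-1)+\frac{\lambda_iY_i^2}{\sqrt{d_i}}$ ($i=1,\dots,r$), $Y_i'=Y_i\big(\mathcal G-\frac{X_i}{\sqrt{d_i}}\big)$ ($i=2,\dots,r$), where $\mathcal G=\sum_{j=1}^rX_j^2$. Let $\mathcal L=\sum_{i=1}^rX_i^2+\sum_{i=2}^r\lambda_iY_i^2-1$, $\mathcal H=\sum_{i=1}^r\sqrt{d_i}X_i$, $$\mathcal D=\{\mathcal L=0,\ \mathcal H=1\}\cap\{Y_i>0\ (i\ge2),\ |X_1-1|<\sqrt2\},$$ and $$\hat{\mathscr F}=\frac{1-\frac{1}{n-1}(1-X_1)^2}{\prod_{i=2}^r\big(\sqrt{\lambda_i}\,Y_i\big)^{\frac{2d_i}{n-1}}}.$$ Then $\hat{\mathscr F}$ is non-increasing along every trajectory of this system lying in $\mathcal D$. *)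

theory Defs
  imports "HOL-Analysis.Analysis"
begin

text \<open>States: X, Y :: nat \<Rightarrow> real, indices 1..r (Y used only for indices 2..r).\<close>

definition Gfun :: "nat \<Rightarrow> (nat \<Rightarrow> real) \<Rightarrow> real" where
  "Gfun r X = (\<Sum>j=1..r. (X j)\<^sup>2)"

definition Lfun :: "nat \<Rightarrow> (nat \<Rightarrow> real) \<Rightarrow> (nat \<Rightarrow> real) \<Rightarrow> (nat \<Rightarrow> real) \<Rightarrow> real" where
  "Lfun r lam X Y = (\<Sum>i=1..r. (X i)\<^sup>2) + (\<Sum>i=2..r. lam i * (Y i)\<^sup>2) - 1"

definition Hfun :: "nat \<Rightarrow> (nat \<Rightarrow> nat) \<Rightarrow> (nat \<Rightarrow> real) \<Rightarrow> real" where
  "Hfun r d X = (\<Sum>i=1..r. sqrt (real (d i)) * X i)"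

definition inD :: "nat \<Rightarrow> (nat \<Rightarrow> nat) \<Rightarrow> (nat \<Rightarrow> real) \<Rightarrow> (nat \<Rightarrow> real) \<Rightarrow> (nat \<Rightarrow> real) \<Rightarrow> bool" where
  "inD r d lam X Y \<longleftrightarrow> Lfun r lam X Y = 0 \<and> Hfun r d X = 1 \<and>
     (\<forall>i\<in>{2..r}. Y i > 0) \<and> \<bar>X 1 - 1\<bar> < sqrt 2"

definition Fhat :: "nat \<Rightarrow> (nat \<Rightarrow> nat) \<Rightarrow> (nat \<Rightarrow> real) \<Rightarrow> (nat \<Rightarrow> real) \<Rightarrow> (nat \<Rightarrow> real) \<Rightarrow> real" where
  "Fhat r d lam X Y =
     (let n = (\<Sum>i=1..r. d i) in
      (1 - (1 - X 1)\<^sup>2 / (real n - 1)) /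
      (\<Prod>i=2..r. (sqrt (lam i) * Y i) powr (2 * real (d i) / (real n - 1))))"

end

theory Submission
  imports Defs
begin

text \<open>
  Put \<open>N = n - 1 = (\<Sum>i\<ge>2. d i)\<close> and \<open>u = 1 - X 1\<close>. On the domain,
  \<open>F = (1 - u\<^sup>2 / N) * exp (- S)\<close> with \<open>S = (\<Sum>i\<ge>2. 2 d i / N * ln (sqrt (\<lambda> i) * Y i))\<close>.
  Since \<open>\<lambda> 1 = 0\<close> the flow gives \<open>X 1' = X 1 * (G - 1)\<close>, and the constraint \<open>H = 1\<close>,
  i.e. \<open>(\<Sum>i\<ge>2. sqrt (d i) * X i) = u\<close>, turns \<open>S'\<close> into \<open>2 / N * (N G - u)\<close>.
  Together \<open>F' = exp (- S) * 2 / N\<^sup>2 * (N - u) * (u\<^sup>2 - N G)\<close>. Cauchy-Schwarz applied to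
  the same constraint gives \<open>u\<^sup>2 \<le> N * (\<Sum>i\<ge>2. X i\<^sup>2) \<le> N G\<close>, and \<open>\<bar>u\<bar> < sqrt 2 < N\<close>,
  so \<open>F' \<le> 0\<close>.
\<close>

lemma DERIV_within_nonpos_imp_decreasing:
  fixes f f' :: "real \<Rightarrow> real"
  assumes I: "is_interval I"
    and deriv: "\<And>x. x \<in> I \<Longrightarrow> (f has_real_derivative f' x) (at x within I)"
    and nonpos: "\<And>x. x \<in> I \<Longrightarrow> f' x \<le> 0"
    and s: "s \<in> I" and t: "t \<in> I" and "s \<le> t"
  shows "f t \<le> f s"
proof -
  have sub: "{s..t} \<subseteq> I"
    using I s t unfolding is_interval_1 by (meson atLeastAtMost_iff subsetI)
  show ?thesis
  proof (rule DERIV_nonpos_imp_decreasing_open[OF \<open>s \<le> t\<close>])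
    fix x assume x: "s < x" "x < t"
    have "{s<..<t} \<subseteq> interior I"
      by (rule interior_maximal) (use sub in auto)
    with x have "x \<in> interior I"
      by auto
    have "x \<in> I"
      using sub x by auto
    have "(f has_real_derivative f' x) (at x)"
      using deriv[OF \<open>x \<in> I\<close>] unfolding at_within_interior[OF \<open>x \<in> interior I\<close>] .
    then show "\<exists>y. (f has_real_derivative y) (at x) \<and> y \<le> 0"
      using nonpos \<open>x \<in> I\<close> by blast
  next
    show "continuous_on {s..t} f"
      using DERIV_continuous_on[OF deriv] sub by (rule continuous_on_subset)
  qed
qed

text \<open>\<open>exp S\<close> times the derivative of \<open>F\<close> along the flow, in terms of \<open>u = 1 - X 1\<close> and \<open>G\<close>.\<close>

definition decay_rate :: "real \<Rightarrow> real \<Rightarrow> real \<Rightarrow> real" where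
  "decay_rate N u G = (2 * u / N) * ((1 - u) * (G - 1)) - (1 - u\<^sup>2 / N) * ((2 / N) * (N * G - u))"

lemma decay_rate_factored:
  assumes "N \<noteq> 0"
  shows "decay_rate N u G = 2 / N\<^sup>2 * ((N - u) * (u\<^sup>2 - N * G))"
  using assms by (simp add: decay_rate_def field_simps power2_eq_square)

lemma decay_rate_nonpos:
  assumes "0 < N" "u \<le> N" "u\<^sup>2 \<le> N * G"
  shows "decay_rate N u G \<le> 0"
  unfolding decay_rate_factored[OF less_imp_neq[OF \<open>0 < N\<close>, symmetric]]
  using assms by (intro mult_nonneg_nonpos mult_nonneg_nonpos2) auto

lemma sum_atLeast1_split:
  fixes r :: nat
  assumes "1 \<le> r"
  shows "(\<Sum>i=1..r. f i) = f 1 + (\<Sum>i=2..r. f i)"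
  using sum.atLeast_Suc_atMost[OF assms, of f] by (simp add: numeral_2_eq_2)

locale Fhat_trajectory =
  fixes r :: nat and d :: "nat \<Rightarrow> nat" and lam :: "nat \<Rightarrow> real"
    and I :: "real set" and X Y :: "real \<Rightarrow> nat \<Rightarrow> real"
  assumes r: "r \<ge> 2"
    and d1: "d 1 = 1" and lam1: "lam 1 = 0"
    and d_ge: "\<forall>i\<in>{2..r}. d i \<ge> 2" and lam_pos: "\<forall>i\<in>{2..r}. lam i > 0"
    and I: "is_interval I"
    and odeX: "\<forall>t\<in>I. \<forall>i\<in>{1..r}.
       ((\<lambda>s. X s i) has_real_derivative
          (X t i * (Gfun r (X t) - 1) + lam i * (Y t i)\<^sup>2 / sqrt (real (d i)))) (at t within I)"
    and odeY: "\<forall>t\<in>I. \<forall>i\<in>{2..r}.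
       ((\<lambda>s. Y s i) has_real_derivative
          (Y t i * (Gfun r (X t) - X t i / sqrt (real (d i))))) (at t within I)"
    and inD: "\<forall>t\<in>I. inD r d lam (X t) (Y t)"
begin

definition N :: real where
  "N = real (\<Sum>i=1..r. d i) - 1"

lemma N_eq_sum: "N = (\<Sum>i=2..r. real (d i))"
  using sum_atLeast1_split[of r "\<lambda>i. real (d i)"] r d1 by (simp add: N_def of_nat_sum)

lemma N_ge_2: "N \<ge> 2"
proof -
  have "real (d 2) \<le> (\<Sum>i=2..r. real (d i))"
    using r by (intro member_le_sum) auto
  then show ?thesis
    using d_ge r by (force simp: N_eq_sum)
qed

definition log_denom :: "real \<Rightarrow> real" where
  "log_denom t = (\<Sum>i=2..r. 2 * real (d i) / N * ln (sqrt (lam i) * Y t i))"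

lemma Y_pos: "t \<in> I \<Longrightarrow> i \<in> {2..r} \<Longrightarrow> Y t i > 0"
  using inD by (auto simp: inD_def)

lemma Fhat_eq:
  assumes t: "t \<in> I"
  shows "Fhat r d lam (X t) (Y t) = (1 - (1 - X t 1)\<^sup>2 / N) * exp (- log_denom t)"
proof -
  have "(\<Prod>i=2..r. (sqrt (lam i) * Y t i) powr (2 * real (d i) / N)) = exp (log_denom t)"
    unfolding log_denom_def exp_sum[OF finite_atLeastAtMost]
  proof (rule prod.cong)
    fix i assume i: "i \<in> {2..r}"
    have "lam i > 0" "Y t i > 0"
      using lam_pos Y_pos[OF t i] i by auto
    then show "(sqrt (lam i) * Y t i) powr (2 * real (d i) / N)
        = exp (2 * real (d i) / N * ln (sqrt (lam i) * Y t i))"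
      by (simp add: powr_def)
  qed simp
  then show ?thesis
    by (simp add: Fhat_def N_def exp_minus divide_inverse)
qed

lemma Gfun_split: "Gfun r x = (x 1)\<^sup>2 + (\<Sum>i=2..r. (x i)\<^sup>2)"
  using sum_atLeast1_split[of r "\<lambda>i. (x i)\<^sup>2"] r by (simp add: Gfun_def)

lemma weighted_tail_sum_eq: "t \<in> I \<Longrightarrow> (\<Sum>i=2..r. sqrt (real (d i)) * X t i) = 1 - X t 1"
  using inD sum_atLeast1_split[of r "\<lambda>i. sqrt (real (d i)) * X t i"] r d1
  by (auto simp: inD_def Hfun_def)

lemma numerator_has_derivative:
  assumes t: "t \<in> I"
  shows "((\<lambda>s. 1 - (1 - X s 1)\<^sup>2 / N) has_real_derivative
           2 * (1 - X t 1) / N * (X t 1 * (Gfun r (X t) - 1))) (at t within I)"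
proof -
  have "((\<lambda>s. X s 1) has_real_derivative X t 1 * (Gfun r (X t) - 1)) (at t within I)"
    using odeX[rule_format, OF t, of 1] r lam1 by simp
  then show ?thesis
    using N_ge_2 by (auto intro!: derivative_eq_intros simp: power2_eq_square field_simps)
qed

lemma log_denom_has_derivative:
  assumes t: "t \<in> I"
  shows "(log_denom has_real_derivative 2 / N * (N * Gfun r (X t) - (1 - X t 1))) (at t within I)"
proof -
  let ?G = "Gfun r (X t)"
  have "(log_denom has_real_derivative
          (\<Sum>i=2..r. 2 * real (d i) / N * (?G - X t i / sqrt (real (d i))))) (at t within I)"
    unfolding log_denom_def[abs_def]
  proof (intro DERIV_sum)
    fix i assume i: "i \<in> {2..r}"
    have "((\<lambda>s. Y s i) has_real_derivative Y t i * (?G - X t i / sqrt (real (d i)))) (at t within I)"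
      using odeY t i by auto
    moreover have "lam i > 0" "Y t i > 0" "N \<noteq> 0"
      using lam_pos Y_pos[OF t i] i N_ge_2 by auto
    ultimately show "((\<lambda>s. 2 * real (d i) / N * ln (sqrt (lam i) * Y s i)) has_real_derivative
        2 * real (d i) / N * (?G - X t i / sqrt (real (d i)))) (at t within I)"
      by (auto intro!: derivative_eq_intros)
  qed
  also have "(\<Sum>i=2..r. 2 * real (d i) / N * (?G - X t i / sqrt (real (d i))))
      = (\<Sum>i=2..r. 2 / N * (real (d i) * ?G - sqrt (real (d i)) * X t i))"
  proof (intro sum.cong refl)
    fix i
    have "real (d i) * (X t i / sqrt (real (d i))) = real (d i) / sqrt (real (d i)) * X t i"
      by simp
    also have "\<dots> = sqrt (real (d i)) * X t i"
      by (simp add: real_div_sqrt)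
    finally have weight: "real (d i) * (X t i / sqrt (real (d i))) = sqrt (real (d i)) * X t i" .
    have "2 * real (d i) / N * (?G - X t i / sqrt (real (d i)))
        = 2 / N * (real (d i) * ?G - real (d i) * (X t i / sqrt (real (d i))))"
      by (simp add: algebra_simps)
    then show "2 * real (d i) / N * (?G - X t i / sqrt (real (d i)))
        = 2 / N * (real (d i) * ?G - sqrt (real (d i)) * X t i)"
      by (simp only: weight)
  qed
  also have "\<dots> = 2 / N * ((\<Sum>i=2..r. real (d i)) * ?G - (\<Sum>i=2..r. sqrt (real (d i)) * X t i))"
    by (simp only: sum_distrib_left[symmetric] sum_subtractf sum_distrib_right[symmetric])
  also have "\<dots> = 2 / N * (N * ?G - (1 - X t 1))"
    by (simp add: weighted_tail_sum_eq[OF t] N_eq_sum)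
  finally show ?thesis .
qed

lemma Fhat_has_derivative:
  assumes t: "t \<in> I"
  shows "((\<lambda>s. Fhat r d lam (X s) (Y s)) has_real_derivative
           exp (- log_denom t) * decay_rate N (1 - X t 1) (Gfun r (X t))) (at t within I)"
proof (rule has_field_derivative_transform_within[OF _ zero_less_one t])
  let ?E = "exp (- log_denom t)" and ?u = "1 - X t 1" and ?G = "Gfun r (X t)"
  have "((\<lambda>s. (1 - (1 - X s 1)\<^sup>2 / N) * exp (- log_denom s)) has_real_derivative
          2 * ?u / N * (X t 1 * (?G - 1)) * ?E + ?E * - (2 / N * (N * ?G - ?u)) * (1 - ?u\<^sup>2 / N))
        (at t within I)"
    by (rule DERIV_mult[OF numerator_has_derivative[OF t]
          DERIV_chain2[OF DERIV_exp DERIV_minus[OF log_denom_has_derivative[OF t]]]])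
  also have "2 * ?u / N * (X t 1 * (?G - 1)) * ?E + ?E * - (2 / N * (N * ?G - ?u)) * (1 - ?u\<^sup>2 / N)
      = ?E * decay_rate N ?u ?G"
    using N_ge_2 by (simp add: decay_rate_def field_simps)
  finally show "((\<lambda>s. (1 - (1 - X s 1)\<^sup>2 / N) * exp (- log_denom s)) has_real_derivative
      ?E * decay_rate N ?u ?G) (at t within I)" .
qed (simp add: Fhat_eq)

lemma decay_rate_nonpos_along:
  assumes t: "t \<in> I"
  shows "decay_rate N (1 - X t 1) (Gfun r (X t)) \<le> 0"
proof (rule decay_rate_nonpos)
  let ?u = "1 - X t 1"
  show "0 < N"
    using N_ge_2 by simp
  have "\<bar>?u\<bar> < sqrt 2"
    using inD t by (auto simp: inD_def abs_minus_commute)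
  then show "?u \<le> N"
    using sqrt2_less_2 N_ge_2 by linarith
  have "?u\<^sup>2 = (\<Sum>i=2..r. sqrt (real (d i)) * X t i)\<^sup>2"
    by (simp add: weighted_tail_sum_eq[OF t])
  also have "\<dots> \<le> (\<Sum>i=2..r. (sqrt (real (d i)))\<^sup>2) * (\<Sum>i=2..r. (X t i)\<^sup>2)"
    by (rule Cauchy_Schwarz_ineq_sum)
  also have "\<dots> \<le> N * Gfun r (X t)"
    using N_ge_2 by (simp add: N_eq_sum Gfun_split)
  finally show "?u\<^sup>2 \<le> N * Gfun r (X t)" .
qed

lemma Fhat_decreasing:
  assumes "s \<in> I" "t \<in> I" "s \<le> t"
  shows "Fhat r d lam (X t) (Y t) \<le> Fhat r d lam (X s) (Y s)"
proof (rule DERIV_within_nonpos_imp_decreasing[OF I Fhat_has_derivative _ assms])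
  show "exp (- log_denom x) * decay_rate N (1 - X x 1) (Gfun r (X x)) \<le> 0" if "x \<in> I" for x
    using decay_rate_nonpos_along[OF that] by (simp add: mult_nonneg_nonpos)
qed

end

theorem lemma4p2:
  fixes r :: nat and d :: "nat \<Rightarrow> nat" and lam :: "nat \<Rightarrow> real"
    and I :: "real set" and X Y :: "real \<Rightarrow> nat \<Rightarrow> real"
  assumes r: "r \<ge> 2"
    and d1: "d 1 = 1" and lam1: "lam 1 = 0"
    and d_ge: "\<forall>i\<in>{2..r}. d i \<ge> 2" and lam_pos: "\<forall>i\<in>{2..r}. lam i > 0"
    and I: "is_interval I"
    and odeX: "\<forall>t\<in>I. \<forall>i\<in>{1..r}.
       ((\<lambda>s. X s i) has_real_derivative
          (X t i * (Gfun r (X t) - 1) + lam i * (Y t i)\<^sup>2 / sqrt (real (d i)))) (at t within I)"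
    and odeY: "\<forall>t\<in>I. \<forall>i\<in>{2..r}.
       ((\<lambda>s. Y s i) has_real_derivative
          (Y t i * (Gfun r (X t) - X t i / sqrt (real (d i))))) (at t within I)"
    and inD: "\<forall>t\<in>I. inD r d lam (X t) (Y t)"
  shows "\<forall>s\<in>I. \<forall>t\<in>I. s \<le> t \<longrightarrow> Fhat r d lam (X t) (Y t) \<le> Fhat r d lam (X s) (Y s)"
proof -
  interpret Fhat_trajectory r d lam I X Y
    using assms by (rule Fhat_trajectory.intro)
  show ?thesis
    using Fhat_decreasing by blast
qed

end
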